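(* Let $\mathbb{F}$ be an algebraically closed field with $\mathrm{char}\,\mathbb{F}=2$, and let $\mathcal{A}$ be a (not necessarily unital) subalgebra of $\mathbf{O}$ with $\mathcal{A}\subseteq\mathbf{O}_0$ and $\dim\mathcal{A}\ge3$. Then there exists $g\in{\rm G}_2$ such that either (a) $\{1_{\mathbf{O}},\mathbf{u}_1,\mathbf{v}_2\}\subseteq g\mathcal{A}$; or (b) $\{\mathbf{u}_1,\mathbf{v}_2,\mathbf{v}_3\}\subseteq g\mathcal{A}$ and $1_{\mathbf{O}}\notin g\mathcal{A}$.
   Context: The split octonion algebra $\mathbf{O}$ is the 8-dimensional $\mathbb{F}$-vector space of formal matrices $a=\begin{pmatrix}\alpha&\mathbf{u}\\ \mathbf{v}&\beta\end{pmatrix}$ with $\alpha,\beta\in\mathbb{F}$, $\mathbf{u},\mathbf{v}\in\mathbb{F}^3$, with multiplication $\begin{pmatrix}\alpha&\mathbf{u}\\ \mathbf{v}&\beta\end{pmatrix}\begin{pmatrix}\alpha'&\mathbf{u}'\\ \mathbf{v}'&\beta'\end{pmatrix}=\begin{pmatrix}\alpha\alpha'+\mathbf{u}\cdot\mathbf{v}'&\alpha\mathbf{u}'+\beta'\mathbf{u}-\mathbf{v}\times\mathbf{v}'\\ \alpha'\mathbf{v}+\beta\mathbf{v}'+\mathbf{u}\times\mathbf{u}'&\beta\beta'+\mathbf{v}\cdot\mathbf{u}'\end{pmatrix}$ (dot product and cross product on $\mathbb{F}^3$). Trace $\mathrm{tr}(a)=\alpha+\beta$, $\mathbf{O}_0=\{a\in\mathbf{O}\mid\mathrm{tr}(a)=0\}$.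 With $\mathbf{c}_1,\mathbf{c}_2,\mathbf{c}_3$ the standard basis of $\mathbb{F}^3$: $\mathbf{u}_i$ has $\mathbf{u}=\mathbf{c}_i$ and all else $0$, $\mathbf{v}_i$ has $\mathbf{v}=\mathbf{c}_i$ and all else $0$, and $1_{\mathbf{O}}$ has $\alpha=\beta=1$, $\mathbf{u}=\mathbf{v}=0$. ${\rm G}_2=\mathrm{Aut}(\mathbf{O})$. *)

theory Defs
  imports "HOL-Computational_Algebra.Polynomial"
begin

type_synonym 'a vec3 = "'a \<times> 'a \<times> 'a"

definition vadd :: "'a::field vec3 \<Rightarrow> 'a vec3 \<Rightarrow> 'a vec3" where
  "vadd x y = (case x of (x1,x2,x3) \<Rightarrow> case y of (y1,y2,y3) \<Rightarrow> (x1+y1, x2+y2, x3+y3))"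
definition vsmult :: "'a::field \<Rightarrow> 'a vec3 \<Rightarrow> 'a vec3" where
  "vsmult c x = (case x of (x1,x2,x3) \<Rightarrow> (c*x1, c*x2, c*x3))"
definition vneg :: "'a::field vec3 \<Rightarrow> 'a vec3" where
  "vneg x = vsmult (-1) x"
definition vdot :: "'a::field vec3 \<Rightarrow> 'a vec3 \<Rightarrow> 'a" where
  "vdot x y = (case x of (x1,x2,x3) \<Rightarrow> case y of (y1,y2,y3) \<Rightarrow> x1*y1 + x2*y2 + x3*y3)"
definition vcross :: "'a::field vec3 \<Rightarrow> 'a vec3 \<Rightarrow> 'a vec3" where
  "vcross x y = (case x of (x1,x2,x3) \<Rightarrow> case y of (y1,y2,y3) \<Rightarrow>
     (x2*y3 - x3*y2, x3*y1 - x1*y3, x1*y2 - x2*y1))"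

text \<open>Split octonions: formal matrices (alpha, u; v, beta).\<close>
datatype 'a oct = Oct (oalpha: 'a) (ou: "'a vec3") (ov: "'a vec3") (obeta: 'a)

definition oadd :: "'a::field oct \<Rightarrow> 'a oct \<Rightarrow> 'a oct" where
  "oadd a b = Oct (oalpha a + oalpha b) (vadd (ou a) (ou b)) (vadd (ov a) (ov b)) (obeta a + obeta b)"
definition osmult :: "'a::field \<Rightarrow> 'a oct \<Rightarrow> 'a oct" where
  "osmult c a = Oct (c * oalpha a) (vsmult c (ou a)) (vsmult c (ov a)) (c * obeta a)"
definition ozero :: "'a::field oct" where
  "ozero = Oct 0 (0,0,0) (0,0,0) 0"
definition omult :: "'a::field oct \<Rightarrow> 'a oct \<Rightarrow> 'a oct" where
  "omult a b = Oct
     (oalpha a * oalpha b + vdot (ou a) (ov b))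
     (vadd (vadd (vsmult (oalpha a) (ou b)) (vsmult (obeta b) (ou a))) (vneg (vcross (ov a) (ov b))))
     (vadd (vadd (vsmult (oalpha b) (ov a)) (vsmult (obeta a) (ov b))) (vcross (ou a) (ou b)))
     (obeta a * obeta b + vdot (ov a) (ou b))"

definition otr :: "'a::field oct \<Rightarrow> 'a" where
  "otr a = oalpha a + obeta a"

definition O0 :: "'a::field oct set" where
  "O0 = {a. otr a = 0}"

definition oone :: "'a::field oct" where "oone = Oct 1 (0,0,0) (0,0,0) 1"
definition u1 :: "'a::field oct" where "u1 = Oct 0 (1,0,0) (0,0,0) 0"
definition v2 :: "'a::field oct" where "v2 = Oct 0 (0,0,0) (0,1,0) 0"
definition v3 :: "'a::field oct" where "v3 = Oct 0 (0,0,0) (0,0,1) 0"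

definition olinear :: "('a::field oct \<Rightarrow> 'a oct) \<Rightarrow> bool" where
  "olinear f \<longleftrightarrow> (\<forall>a b. f (oadd a b) = oadd (f a) (f b)) \<and> (\<forall>c a. f (osmult c a) = osmult c (f a))"

definition G2 :: "('a::field oct \<Rightarrow> 'a oct) set" where
  "G2 = {g. olinear g \<and> bij g \<and> (\<forall>a b. g (omult a b) = omult (g a) (g b))}"

definition osubspace :: "'a::field oct set \<Rightarrow> bool" where
  "osubspace A \<longleftrightarrow> ozero \<in> A \<and> (\<forall>a\<in>A. \<forall>b\<in>A. oadd a b \<in> A) \<and> (\<forall>c. \<forall>a\<in>A. osmult c a \<in> A)"

definition osubalgebra :: "'a::field oct set \<Rightarrow> bool" where
  "osubalgebra A \<longleftrightarrow> osubspace A \<and> (\<forall>a\<in>A. \<forall>b\<in>A. omult a b \<in> A)"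

definition olin_indep :: "'a::field oct list \<Rightarrow> bool" where
  "olin_indep xs \<longleftrightarrow> (\<forall>c :: nat \<Rightarrow> 'a.
     foldr oadd (map (\<lambda>i. osmult (c i) (xs ! i)) [0..<length xs]) ozero = ozero
     \<longrightarrow> (\<forall>i<length xs. c i = 0))"

definition odim_ge :: "'a::field oct set \<Rightarrow> nat \<Rightarrow> bool" where
  "odim_ge A n \<longleftrightarrow> (\<exists>xs. length xs = n \<and> set xs \<subseteq> A \<and> olin_indep xs)"

end

theory Submission
  imports Defs
begin

(*
  For traceless x, y one has xy + yx = tr(xy) 1, so in characteristic 2 a traceless subalgebra
  is commutative. Automorphisms preserve trace and norm, and the automorphisms induced by SL3,
  the flip and the shears move every nonzero traceless isotropic element to u1.

  If 1 is in A, adding suitable scalars to three independent elements of A makes them isotropic,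
  and two of the results are not proportional. Moving the first one to u1, the second one yields
  an element (0, 0; (0, r2, r3), 0) of A, which an SL3 element fixing u1 moves to v2.

  If 1 is not in A, all elements of A are isotropic, so their squares vanish. If some product yz
  is nonzero, move it to u1: by left alternativity y and z then annihilate u1 from the left, and
  in this annihilator the relation yz = u1 exhibits v2 and v3 as combinations of y, z and u1.
  If all products vanish, the same annihilator argument shows that A has dimension at most 2.
*)

lemma vadd_triple [simp]: "vadd (a, b, c) (d, e, f) = (a+d, b+e, c+f)"
  by (simp add: vadd_def)

lemma vsmult_triple [simp]: "vsmult k (a, b, c) = (k*a, k*b, k*c)"
  by (simp add: vsmult_def)

lemma vneg_triple [simp]: "vneg (a, b, c) = (-a, -b, -c)"
  by (simp add: vneg_def)

lemma vdot_triple [simp]: "vdot (a, b, c) (d, e, f) = a*d + b*e + c*f"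
  by (simp add: vdot_def)

lemma vcross_triple [simp]: "vcross (a, b, c) (d, e, f) = (b*f - c*e, c*d - a*f, a*e - b*d)"
  by (simp add: vcross_def)

lemma vdot_commute: "vdot x y = vdot y x"
  by (cases x; cases y) (simp add: algebra_simps)

lemma vsmult_one [simp]: "vsmult 1 x = x"
  by (cases x) simp

lemma oct_coordinates:
  obtains al a1 a2 a3 b1 b2 b3 be where "x = Oct al (a1, a2, a3) (b1, b2, b3) be"
  by (metis oct.exhaust prod_cases3)

lemma traceless_coordinates:
  assumes "otr x = 0"
  obtains al a1 a2 a3 b1 b2 b3 where "x = Oct al (a1, a2, a3) (b1, b2, b3) (-al)"
proof -
  obtain al a1 a2 a3 b1 b2 b3 be where x: "x = Oct al (a1, a2, a3) (b1, b2, b3) be"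
    by (rule oct_coordinates)
  with assms have "be = -al" by (simp add: otr_def eq_neg_iff_add_eq_0 add.commute)
  with x that show thesis by blast
qed

definition onorm :: "'a::field oct \<Rightarrow> 'a" where
  "onorm a = oalpha a * obeta a - vdot (ou a) (ov a)"

lemma oadd_ozero_right [simp]: "oadd x ozero = x"
  by (cases x rule: oct_coordinates) (simp add: oadd_def ozero_def)

lemma oadd_ozero_left [simp]: "oadd ozero x = x"
  by (cases x rule: oct_coordinates) (simp add: oadd_def ozero_def)

lemma osmult_zero_left [simp]: "osmult 0 x = ozero"
  by (cases x rule: oct_coordinates) (simp add: osmult_def ozero_def)

lemma osmult_one [simp]: "osmult 1 x = x"
  by (cases x rule: oct_coordinates) (simp add: osmult_def)

lemma osmult_osmult [simp]: "osmult c (osmult d x) = osmult (c * d) x"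
  by (cases x rule: oct_coordinates) (simp add: osmult_def)

lemma omult_ozero_left [simp]: "omult ozero x = ozero"
  by (cases x rule: oct_coordinates) (simp add: omult_def ozero_def)

lemma omult_oone_left [simp]: "omult oone x = x"
  by (cases x rule: oct_coordinates) (simp add: omult_def oone_def)

lemma omult_oone_right [simp]: "omult x oone = x"
  by (cases x rule: oct_coordinates) (simp add: omult_def oone_def)

lemma osmult_oone_eq_ozero_iff [simp]: "osmult c oone = ozero \<longleftrightarrow> c = 0"
  by (simp add: osmult_def oone_def ozero_def)

lemma omult_self: "omult x x = oadd (osmult (otr x) x) (osmult (- onorm x) oone)"
  by (cases x rule: oct_coordinates)
     (simp add: omult_def oadd_def osmult_def otr_def onorm_def oone_def algebra_simps)

lemma onorm_add_scalar:
  "otr w = 0 \<Longrightarrow> onorm (oadd w (osmult l oone)) = onorm w + l * (l::'a::field)"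
  by (erule traceless_coordinates) (simp add: onorm_def oadd_def osmult_def oone_def algebra_simps)

lemma omult_self_traceless: "otr x = 0 \<Longrightarrow> omult x x = osmult (- onorm x) oone"
  by (simp add: omult_self)

lemma omult_left_alternative: "omult x (omult x y) = omult (omult x x) y"
  by (cases x rule: oct_coordinates; cases y rule: oct_coordinates) (simp add: omult_def algebra_simps)

lemma omult_traceless_anticommutator:
  assumes "otr x = 0" "otr y = 0"
  shows "oadd (omult x y) (omult y x) = osmult (otr (omult x y)) oone"
proof -
  obtain al a1 a2 a3 b1 b2 b3 where x: "x = Oct al (a1, a2, a3) (b1, b2, b3) (-al)"
    using assms(1) by (rule traceless_coordinates)
  obtain al' a1' a2' a3' b1' b2' b3' where y: "y = Oct al' (a1', a2', a3') (b1', b2', b3') (-al')"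
    using assms(2) by (rule traceless_coordinates)
  show ?thesis
    by (simp add: x y omult_def oadd_def osmult_def otr_def oone_def algebra_simps)
qed

lemma oadd_eq_ozero_char2:
  assumes "(2::'a::field) = 0" "oadd x y = (ozero :: 'a oct)"
  shows "x = y"
proof -
  have neg: "p + q = 0 \<Longrightarrow> p = q" for p q :: 'a
    using assms(1) by (metis add_right_cancel mult_2 mult_zero_left)
  obtain al a1 a2 a3 b1 b2 b3 be where x: "x = Oct al (a1, a2, a3) (b1, b2, b3) be"
    by (rule oct_coordinates)
  obtain al' a1' a2' a3' b1' b2' b3' be' where y: "y = Oct al' (a1', a2', a3') (b1', b2', b3') be'"
    by (rule oct_coordinates)
  from assms(2) show ?thesis
    by (simp add: x y oadd_def ozero_def neg)
qed

lemma omult_commute_char2: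
  assumes "(2::'a::field) = 0" "otr x = 0" "otr y = 0" "otr (omult x y) = (0::'a)"
  shows "omult x y = omult y x"
  using omult_traceless_anticommutator[OF assms(2,3)] assms(4)
  by (simp add: oadd_eq_ozero_char2[OF assms(1)])

lemma G2I:
  assumes "\<And>a b. f (oadd a b) = oadd (f a) (f b)"
    and "\<And>c a. f (osmult c a) = osmult c (f a)"
    and "\<And>a b. f (omult a b) = omult (f a) (f b)"
    and "\<And>a. h (f a) = a" and "\<And>a. f (h a) = a"
  shows "f \<in> G2"
proof -
  have "bij f"
    by (rule bij_betw_byWitness[where f' = h]) (use assms in auto)
  with assms show ?thesis
    by (auto simp: G2_def olinear_def)
qed

lemma G2_comp: "f \<in> G2 \<Longrightarrow> g \<in> G2 \<Longrightarrow> f \<circ> g \<in> G2"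
  by (auto simp: G2_def olinear_def bij_comp)

lemma
  assumes "g \<in> G2"
  shows G2_oadd: "g (oadd a b) = oadd (g a) (g b)"
    and G2_osmult: "g (osmult c a) = osmult c (g a)"
    and G2_omult: "g (omult a b) = omult (g a) (g b)"
    and G2_inj: "inj g"
  using assms by (auto simp: G2_def olinear_def bij_is_inj)

lemma G2_ozero: "g \<in> G2 \<Longrightarrow> g ozero = ozero"
  by (metis G2_osmult osmult_zero_left)

lemma G2_oone:
  assumes "g \<in> G2"
  shows "g oone = oone"
proof -
  have "surj g"
    using assms by (simp add: G2_def bij_is_surj)
  then obtain b where b: "g b = oone"
    by (metis surjD)
  have "g oone = omult (g oone) (g b)"
    by (simp add: b)
  also have "\<dots> = g (omult oone b)"
    by (simp only: G2_omult[OF assms])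
  also have "\<dots> = oone"
    by (simp add: b)
  finally show ?thesis .
qed

lemma oct_quadratic_coeffs_unique:
  assumes eq: "oadd (osmult t y) (osmult m oone) = oadd (osmult t' y) (osmult m' oone)"
    and not_scalar: "\<forall>c. y \<noteq> osmult c oone"
  shows "t = t' \<and> m = m'"
proof -
  obtain al a1 a2 a3 b1 b2 b3 be where y: "y = Oct al (a1, a2, a3) (b1, b2, b3) be"
    by (rule oct_coordinates)
  have coords: "t*al + m = t'*al + m'" "t*be + m = t'*be + m'"
    "t*a1 = t'*a1" "t*a2 = t'*a2" "t*a3 = t'*a3" "t*b1 = t'*b1" "t*b2 = t'*b2" "t*b3 = t'*b3"
    using eq by (simp_all add: y oadd_def osmult_def oone_def)
  have "t = t'"
  proof (rule ccontr)
    assume "t \<noteq> t'"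
    moreover have "(t - t') * (al - be) = 0"
      using coords(1,2) by algebra
    ultimately have "a1 = 0" "a2 = 0" "a3 = 0" "b1 = 0" "b2 = 0" "b3 = 0" "be = al"
      using coords by auto
    then have "y = osmult al oone"
      by (simp add: y osmult_def oone_def)
    with not_scalar show False by blast
  qed
  with coords show ?thesis by simp
qed

(* Trace and norm are the coefficients of the quadratic relation omult_self, which g preserves. *)
lemma G2_otr_onorm:
  assumes "g \<in> G2"
  shows "otr (g a) = otr a \<and> onorm (g a) = onorm a"
proof (cases "\<exists>c. a = osmult c oone")
  case True
  then show ?thesis
    using assms by (auto simp: G2_osmult G2_oone)
next
  case False
  have "\<forall>c. g a \<noteq> osmult c oone"
    using False G2_inj[OF assms] by (metis G2_oone G2_osmult assms injD)
  moreover have "oadd (osmult (otr (g a)) (g a)) (osmult (- onorm (g a)) oone)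
      = oadd (osmult (otr a) (g a)) (osmult (- onorm a) oone)"
    using omult_self[of a] omult_self[of "g a"]
    by (simp add: G2_omult[OF assms, symmetric] G2_oadd[OF assms] G2_osmult[OF assms] G2_oone[OF assms])
  ultimately show ?thesis
    using oct_quadratic_coeffs_unique by fastforce
qed

lemma G2_otr: "g \<in> G2 \<Longrightarrow> otr (g a) = otr a"
  and G2_onorm: "g \<in> G2 \<Longrightarrow> onorm (g a) = onorm a"
  by (simp_all add: G2_otr_onorm)

lemma
  assumes "osubalgebra A"
  shows osubalgebra_ozero: "ozero \<in> A"
    and osubalgebra_oadd: "a \<in> A \<Longrightarrow> b \<in> A \<Longrightarrow> oadd a b \<in> A"
    and osubalgebra_osmult: "a \<in> A \<Longrightarrow> osmult c a \<in> A"
    and osubalgebra_omult: "a \<in> A \<Longrightarrow> b \<in> A \<Longrightarrow> omult a b \<in> A"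
  using assms by (simp_all add: osubalgebra_def osubspace_def)

lemma osubalgebra_image_G2:
  assumes "g \<in> G2" "osubalgebra A"
  shows "osubalgebra (g ` A)"
  unfolding osubalgebra_def osubspace_def
proof (intro conjI ballI allI)
  show "ozero \<in> g ` A"
    using G2_ozero[OF assms(1)] osubalgebra_ozero[OF assms(2)] by force
next
  fix x y assume "x \<in> g ` A" "y \<in> g ` A"
  then obtain a b where "a \<in> A" "b \<in> A" "x = g a" "y = g b" by auto
  then show "oadd x y \<in> g ` A" "omult x y \<in> g ` A"
    using assms by (metis G2_oadd image_eqI osubalgebra_oadd, metis G2_omult image_eqI osubalgebra_omult)
next
  fix c x assume "x \<in> g ` A"
  then obtain a where "a \<in> A" "x = g a" by auto
  then show "osmult c x \<in> g ` A"
    using assms by (metis G2_osmult image_eqI osubalgebra_osmult)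
qed

lemma O0_image_G2: "g \<in> G2 \<Longrightarrow> A \<subseteq> O0 \<Longrightarrow> g ` A \<subseteq> O0"
  by (auto simp: O0_def G2_otr)

definition oindep3 :: "'a::field oct \<Rightarrow> 'a oct \<Rightarrow> 'a oct \<Rightarrow> bool" where
  "oindep3 a b c \<longleftrightarrow>
    (\<forall>k1 k2 k3. oadd (osmult k1 a) (oadd (osmult k2 b) (osmult k3 c)) = ozero
      \<longrightarrow> k1 = 0 \<and> k2 = 0 \<and> k3 = 0)"

lemma odim_ge_3_oindep3:
  assumes "odim_ge A 3"
  obtains a b c where "a \<in> A" "b \<in> A" "c \<in> A" "oindep3 a b c"
proof -
  obtain xs where xs: "length xs = 3" "set xs \<subseteq> A" "olin_indep xs"
    using assms by (auto simp: odim_ge_def)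
  then obtain a b c where abc: "xs = [a, b, c]"
    by (auto simp: numeral_3_eq_3 length_Suc_conv)
  have "oindep3 a b c"
    unfolding oindep3_def
  proof (intro allI impI)
    fix k1 k2 k3
    assume "oadd (osmult k1 a) (oadd (osmult k2 b) (osmult k3 c)) = ozero"
    moreover define k where "k i = (if i = 0 then k1 else if i = 1 then k2 else k3)" for i :: nat
    ultimately have "foldr oadd (map (\<lambda>i. osmult (k i) (xs ! i)) [0..<length xs]) ozero = ozero"
      by (simp add: abc upt_rec)
    with xs have "\<forall>i<3. k i = 0"
      by (simp add: olin_indep_def)
    then have "k 0 = 0" "k 1 = 0" "k 2 = 0"
      by simp_all
    then show "k1 = 0 \<and> k2 = 0 \<and> k3 = 0"
      by (simp add: k_def)
  qed
  with xs abc that show thesis by auto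
qed

lemma oindep3_image_G2:
  assumes "g \<in> G2" "oindep3 a b c"
  shows "oindep3 (g a) (g b) (g c)"
  unfolding oindep3_def
proof (intro allI impI)
  fix k1 k2 k3
  assume "oadd (osmult k1 (g a)) (oadd (osmult k2 (g b)) (osmult k3 (g c))) = ozero"
  then have "g (oadd (osmult k1 a) (oadd (osmult k2 b) (osmult k3 c))) = g ozero"
    using assms(1) by (simp add: G2_oadd G2_osmult G2_ozero)
  then have "oadd (osmult k1 a) (oadd (osmult k2 b) (osmult k3 c)) = ozero"
    using G2_inj[OF assms(1)] by (simp add: inj_eq)
  with assms(2) show "k1 = 0 \<and> k2 = 0 \<and> k3 = 0"
    by (simp add: oindep3_def)
qed

lemma oindep3_nonzero: "oindep3 a b c \<Longrightarrow> a \<noteq> ozero"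
  unfolding oindep3_def
  by (metis oadd_ozero_left oadd_ozero_right osmult_one osmult_zero_left zero_neq_one)

lemma exists_noncollinear_pair:
  assumes "\<not> (\<exists>y. \<forall>x\<in>X. \<exists>\<mu>. x = osmult \<mu> y)"
  obtains y z where "y \<in> X" "z \<in> X" "y \<noteq> ozero" "\<forall>\<mu>. z \<noteq> osmult \<mu> y"
proof -
  obtain y where "y \<in> X" "y \<noteq> ozero"
    using assms by (metis osmult_zero_left)
  with assms that show thesis by blast
qed

lemma singular_2x2_kernel:
  fixes p1 p2 q1 q2 :: "'a::field"
  assumes "p1 * q2 = p2 * q1"
  obtains x y where "(x, y) \<noteq> (0, 0)" "x * p1 + y * p2 = 0" "x * q1 + y * q2 = 0"
proof (cases "(p1, p2) = (0, 0)")
  case False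
  then show thesis
    using assms by (intro that[of p2 "- p1"]) (auto simp: algebra_simps)
next
  case p: True
  show thesis
  proof (cases "(q1, q2) = (0, 0)")
    case True
    with p show thesis by (intro that[of 1 0]) auto
  next
    case False
    with p show thesis by (intro that[of q2 "- q1"]) (auto simp: algebra_simps)
  qed
qed

lemma orthogonal_to_two:
  fixes m n :: "'a::field vec3"
  obtains k where "k \<noteq> (0, 0, 0)" "vdot k m = 0" "vdot k n = 0"
proof -
  obtain m1 m2 m3 n1 n2 n3 where mn: "m = (m1, m2, m3)" "n = (n1, n2, n3)"
    by (metis prod_cases3)
  show thesis
  proof (cases "vcross m n = (0, 0, 0)")
    case False
    show thesis
      by (rule that[OF False]) (simp_all add: mn algebra_simps)
  next
    case True
    then have "m1 * n2 = m2 * n1"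
      by (simp add: mn)
    then obtain x y where "(x, y) \<noteq> (0, 0)" "x * m1 + y * m2 = 0" "x * n1 + y * n2 = 0"
      by (rule singular_2x2_kernel)
    then show thesis
      by (intro that[of "(x, y, 0)"]) (auto simp: mn)
  qed
qed

lemma not_oindep3_span2:
  "\<not> oindep3 (oadd (osmult m1 e) (osmult n1 f)) (oadd (osmult m2 e) (osmult n2 f))
      (oadd (osmult m3 e) (osmult n3 f))"
  (is "\<not> oindep3 ?x1 ?x2 ?x3")
proof -
  obtain k where "k \<noteq> (0, 0, 0)" "vdot k (m1, m2, m3) = 0" "vdot k (n1, n2, n3) = 0"
    by (rule orthogonal_to_two)
  then obtain k1 k2 k3 where k: "(k1, k2, k3) \<noteq> (0, 0, 0)"
      "k1 * m1 + k2 * m2 + k3 * m3 = 0" "k1 * n1 + k2 * n2 + k3 * n3 = 0"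
    by (metis prod_cases3 vdot_triple)
  have combination: "k1 * (m1 * s + n1 * t) + (k2 * (m2 * s + n2 * t) + k3 * (m3 * s + n3 * t)) = 0"
    for s t
  proof -
    have "k1 * (m1 * s + n1 * t) + (k2 * (m2 * s + n2 * t) + k3 * (m3 * s + n3 * t))
        = (k1 * m1 + k2 * m2 + k3 * m3) * s + (k1 * n1 + k2 * n2 + k3 * n3) * t"
      by (simp add: algebra_simps)
    with k show ?thesis by simp
  qed
  obtain al a1 a2 a3 b1 b2 b3 be where e: "e = Oct al (a1, a2, a3) (b1, b2, b3) be"
    by (rule oct_coordinates)
  obtain al' a1' a2' a3' b1' b2' b3' be' where f: "f = Oct al' (a1', a2', a3') (b1', b2', b3') be'"
    by (rule oct_coordinates)
  have "oadd (osmult k1 ?x1) (oadd (osmult k2 ?x2) (osmult k3 ?x3)) = ozero"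
    by (simp add: e f oadd_def osmult_def ozero_def combination)
  with k(1) show ?thesis
    by (auto simp: oindep3_def)
qed

section \<open>Automorphisms from SL3, the flip and the shears\<close>

type_synonym 'a mat3 = "'a vec3 \<times> 'a vec3 \<times> 'a vec3"

definition mvmult :: "'a::field mat3 \<Rightarrow> 'a vec3 \<Rightarrow> 'a vec3" where
  "mvmult M u = (case M of (r1, r2, r3) \<Rightarrow> (vdot r1 u, vdot r2 u, vdot r3 u))"

definition mcof :: "'a::field mat3 \<Rightarrow> 'a mat3" where
  "mcof M = (case M of (r1, r2, r3) \<Rightarrow> (vcross r2 r3, vcross r3 r1, vcross r1 r2))"

definition mdet :: "'a::field mat3 \<Rightarrow> 'a" where
  "mdet M = (case M of (r1, r2, r3) \<Rightarrow> vdot r1 (vcross r2 r3))"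

definition mtransp :: "'a::field mat3 \<Rightarrow> 'a mat3" where
  "mtransp M =
    (case M of ((a, b, c), (d, e, f), (g, h, i)) \<Rightarrow> ((a, d, g), (b, e, h), (c, f, i)))"

lemma mat3_coordinates:
  obtains a b c d e f g h i where "M = ((a, b, c), (d, e, f), (g, h, i))"
  by (metis prod_cases3)

lemma mvmult_vadd: "mvmult M (vadd x y) = vadd (mvmult M x) (mvmult M y)"
  by (cases M rule: mat3_coordinates; cases x; cases y) (simp add: mvmult_def algebra_simps)

lemma mvmult_vsmult: "mvmult M (vsmult c x) = vsmult c (mvmult M x)"
  by (cases M rule: mat3_coordinates; cases x) (simp add: mvmult_def algebra_simps)

lemma mvmult_vneg: "mvmult M (vneg x) = vneg (mvmult M x)"
  by (simp add: vneg_def mvmult_vsmult)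

lemma mvmult_zero [simp]: "mvmult M (0, 0, 0) = (0, 0, 0)"
  by (cases M rule: mat3_coordinates) (simp add: mvmult_def)

lemma vdot_mvmult_mcof: "vdot (mvmult M u) (mvmult (mcof M) v) = mdet M * vdot u v"
  by (cases M rule: mat3_coordinates; cases u; cases v)
     (simp add: mvmult_def mcof_def mdet_def algebra_simps)

lemma vcross_mvmult: "vcross (mvmult M u) (mvmult M v) = mvmult (mcof M) (vcross u v)"
  by (cases M rule: mat3_coordinates; cases u; cases v)
     (simp add: mvmult_def mcof_def algebra_simps)

lemma mvmult_mcof_mcof: "mvmult (mcof (mcof M)) u = vsmult (mdet M) (mvmult M u)"
  by (cases M rule: mat3_coordinates; cases u)
     (simp add: mvmult_def mcof_def mdet_def algebra_simps)

lemma mvmult_mcof_mtransp_mcof: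
  "mvmult (mcof (mtransp (mcof M))) u = vsmult (mdet M) (mvmult (mtransp M) u)"
  by (cases M rule: mat3_coordinates; cases u)
     (simp add: mvmult_def mcof_def mdet_def mtransp_def algebra_simps)

lemma mvmult_adjugate:
  "mvmult (mtransp (mcof M)) (mvmult M u) = vsmult (mdet M) u"
  "mvmult M (mvmult (mtransp (mcof M)) u) = vsmult (mdet M) u"
  "mvmult (mtransp M) (mvmult (mcof M) u) = vsmult (mdet M) u"
  "mvmult (mcof M) (mvmult (mtransp M) u) = vsmult (mdet M) u"
  by (cases M rule: mat3_coordinates; cases u;
      simp add: mvmult_def mcof_def mdet_def mtransp_def algebra_simps)+

(* M acts on the u-part and the contragredient matrix, which is mcof M if mdet M = 1, on the v-part. *)
definition oct_sl3 :: "'a::field mat3 \<Rightarrow> 'a oct \<Rightarrow> 'a oct" where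
  "oct_sl3 M a = Oct (oalpha a) (mvmult M (ou a)) (mvmult (mcof M) (ov a)) (obeta a)"

lemma oct_sl3_G2:
  assumes "mdet M = 1"
  shows "oct_sl3 M \<in> G2"
proof (rule G2I[where h = "oct_sl3 (mtransp (mcof M))"])
  fix a b :: "'a oct"
  show "oct_sl3 M (oadd a b) = oadd (oct_sl3 M a) (oct_sl3 M b)"
    by (simp add: oct_sl3_def oadd_def mvmult_vadd)
  show "oct_sl3 M (omult a b) = omult (oct_sl3 M a) (oct_sl3 M b)"
    using assms
    by (simp add: oct_sl3_def omult_def mvmult_vadd mvmult_vsmult mvmult_vneg vdot_mvmult_mcof
        vcross_mvmult mvmult_mcof_mcof vdot_commute[of "mvmult (mcof M) _"])
      (simp add: vdot_commute)
  show "oct_sl3 (mtransp (mcof M)) (oct_sl3 M a) = a"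
    using assms by (cases a) (simp add: oct_sl3_def mvmult_adjugate mvmult_mcof_mtransp_mcof)
  show "oct_sl3 M (oct_sl3 (mtransp (mcof M)) a) = a"
    using assms by (cases a) (simp add: oct_sl3_def mvmult_adjugate mvmult_mcof_mtransp_mcof)
next
  fix c and a :: "'a oct"
  show "oct_sl3 M (osmult c a) = osmult c (oct_sl3 M a)"
    by (simp add: oct_sl3_def osmult_def mvmult_vsmult)
qed

definition oct_flip :: "'a::field oct \<Rightarrow> 'a oct" where
  "oct_flip a = Oct (obeta a) (vneg (ov a)) (vneg (ou a)) (oalpha a)"

definition oct_shear :: "'a::field vec3 \<Rightarrow> 'a oct \<Rightarrow> 'a oct" where
  "oct_shear w a = Oct (oalpha a - vdot w (ov a))
     (vadd (vadd (ou a) (vsmult (oalpha a - obeta a) w)) (vsmult (- vdot w (ov a)) w))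
     (vadd (ov a) (vcross w (ou a))) (obeta a + vdot w (ov a))"

lemma oct_flip_G2: "oct_flip \<in> G2"
proof (rule G2I[where h = oct_flip])
  fix a b :: "'a oct"
  obtain al a1 a2 a3 b1 b2 b3 be where a: "a = Oct al (a1, a2, a3) (b1, b2, b3) be"
    by (rule oct_coordinates)
  obtain al' a1' a2' a3' b1' b2' b3' be' where b: "b = Oct al' (a1', a2', a3') (b1', b2', b3') be'"
    by (rule oct_coordinates)
  show "oct_flip (oadd a b) = oadd (oct_flip a) (oct_flip b)"
    by (simp add: a b oct_flip_def oadd_def)
  show "oct_flip (omult a b) = omult (oct_flip a) (oct_flip b)"
    by (simp add: a b oct_flip_def omult_def algebra_simps)
  show "oct_flip (oct_flip a) = a" "oct_flip (oct_flip a) = a"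
    by (simp_all add: a oct_flip_def)
next
  fix c and a :: "'a oct"
  show "oct_flip (osmult c a) = osmult c (oct_flip a)"
    by (cases a rule: oct_coordinates) (simp add: oct_flip_def osmult_def)
qed

lemma oct_shear_G2: "oct_shear w \<in> G2"
proof (rule G2I[where h = "oct_shear (vneg w)"])
  obtain w1 w2 w3 where w: "w = (w1, w2, w3)"
    by (metis prod_cases3)
  fix a b :: "'a oct"
  obtain al a1 a2 a3 b1 b2 b3 be where a: "a = Oct al (a1, a2, a3) (b1, b2, b3) be"
    by (rule oct_coordinates)
  obtain al' a1' a2' a3' b1' b2' b3' be' where b: "b = Oct al' (a1', a2', a3') (b1', b2', b3') be'"
    by (rule oct_coordinates)
  show "oct_shear w (oadd a b) = oadd (oct_shear w a) (oct_shear w b)"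
    by (simp add: w a b oct_shear_def oadd_def algebra_simps)
  show "oct_shear w (omult a b) = omult (oct_shear w a) (oct_shear w b)"
    by (simp add: w a b oct_shear_def omult_def algebra_simps)
  show "oct_shear (vneg w) (oct_shear w a) = a" "oct_shear w (oct_shear (vneg w) a) = a"
    by (simp_all add: w a oct_shear_def algebra_simps)
next
  fix c and a :: "'a oct"
  show "oct_shear w (osmult c a) = osmult c (oct_shear w a)"
    by (cases w; cases a rule: oct_coordinates) (simp add: oct_shear_def osmult_def algebra_simps)
qed

section \<open>Moving isotropic traceless elements to u1\<close>

lemma SL3_maps_to_e1:
  assumes "u \<noteq> ((0::'a::field), 0, 0)"
  obtains M where "mdet M = 1" "mvmult M u = (1, 0, 0)"
proof -
  obtain x y z where u: "u = (x, y, z)"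
    by (metis prod_cases3)
  consider "x \<noteq> 0" | "x = 0" "y \<noteq> 0" | "x = 0" "y = 0" "z \<noteq> 0"
    using assms u by auto
  then show thesis
  proof cases
    case 1
    then show thesis
      by (intro that[of "((1/x, 0, 0), (-y, x, 0), (-z/x, 0, 1))"])
        (simp_all add: u mdet_def mvmult_def field_simps)
  next
    case 2
    then show thesis
      by (intro that[of "((0, 1/y, 0), (-y, 0, 0), (0, -z/y, 1))"])
        (simp_all add: u mdet_def mvmult_def field_simps)
  next
    case 3
    then show thesis
      by (intro that[of "((0, 0, 1/z), (z, 0, 0), (0, 1, 0))"])
        (simp_all add: u mdet_def mvmult_def field_simps)
  qed
qed

lemma G2_maps_to_u1_if_scalar_part_zero:
  assumes "u \<noteq> (0, 0, 0)" "vdot u v = (0::'a::field)"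
  obtains g where "g \<in> G2" "g (Oct 0 u v 0) = u1"
proof -
  obtain M where M: "mdet M = 1" "mvmult M u = (1, 0, 0)"
    using SL3_maps_to_e1[OF assms(1)] by blast
  obtain y1 y2 y3 where y: "mvmult (mcof M) v = (y1, y2, y3)"
    by (metis prod_cases3)
  have "y1 = 0"
    using vdot_mvmult_mcof[of M u v] M y assms(2) by simp
  then have "(oct_shear (0, y3, -y2) \<circ> oct_sl3 M) (Oct 0 u v 0) = u1"
    by (simp add: M y oct_sl3_def oct_shear_def u1_def)
  with oct_shear_G2 oct_sl3_G2[OF M(1)] show thesis
    by (intro that[of "oct_shear (0, y3, -y2) \<circ> oct_sl3 M"]) (auto intro: G2_comp)
qed

lemma G2_maps_to_u1_if_u_part_e1:
  assumes "onorm (Oct al (1, 0, 0) v (-al)) = (0::'a::field)"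
  obtains g where "g \<in> G2" "g (Oct al (1, 0, 0) v (-al)) = u1"
proof -
  obtain q1 q2 q3 where v: "v = (q1, q2, q3)"
    by (metis prod_cases3)
  let ?h = "oct_flip \<circ> oct_shear (al, 0, 0) \<circ> oct_flip"
  have h: "?h \<in> G2"
    by (intro G2_comp oct_flip_G2 oct_shear_G2)
  have hx: "?h (Oct al (1, 0, 0) v (-al)) = Oct 0 (1, -al*q3, al*q2) (q1 + al*al, q2, q3) 0"
    by (simp add: v oct_flip_def oct_shear_def algebra_simps)
  have "vdot (1, -al*q3, al*q2) (q1 + al*al, q2, q3) = 0"
    using assms by (simp add: v onorm_def) (metis add.commute neg_eq_iff_add_eq_0)
  then obtain g where "g \<in> G2" "g (?h (Oct al (1, 0, 0) v (-al))) = u1"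
    using G2_maps_to_u1_if_scalar_part_zero[of "(1, -al*q3, al*q2)"]
    by (metis hx prod.inject zero_neq_one)
  with h show thesis
    by (intro that[of "g \<circ> ?h"]) (auto intro: G2_comp)
qed

lemma G2_maps_isotropic_to_u1:
  assumes "otr x = 0" "onorm x = 0" "x \<noteq> (ozero::'a::field oct)"
  obtains g where "g \<in> G2" "g x = u1"
proof -
  obtain al a1 a2 a3 b1 b2 b3 where x: "x = Oct al (a1, a2, a3) (b1, b2, b3) (-al)"
    using assms(1) by (rule traceless_coordinates)
  show thesis
  proof (cases "(a1, a2, a3) = (0, 0, 0)")
    case False
    then obtain M where M: "mdet M = 1" "mvmult M (a1, a2, a3) = (1, 0, 0)"
      by (rule SL3_maps_to_e1)
    have Mx: "oct_sl3 M x = Oct al (1, 0, 0) (mvmult (mcof M) (b1, b2, b3)) (-al)"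
      by (simp add: x M oct_sl3_def)
    moreover have "onorm (oct_sl3 M x) = 0"
      using assms(2) G2_onorm[OF oct_sl3_G2[OF M(1)]] by simp
    ultimately obtain g where "g \<in> G2" "g (oct_sl3 M x) = u1"
      by (metis G2_maps_to_u1_if_u_part_e1)
    with oct_sl3_G2[OF M(1)] show thesis
      by (intro that[of "g \<circ> oct_sl3 M"]) (auto intro: G2_comp)
  next
    case True
    with assms(2) have "al = 0"
      by (simp add: x onorm_def)
    with True assms(3) have "(-b1, -b2, -b3) \<noteq> (0, 0, 0)"
      by (auto simp: x ozero_def)
    then obtain M where M: "mdet M = 1" "mvmult M (-b1, -b2, -b3) = (1, 0, 0)"
      by (rule SL3_maps_to_e1)
    have "(oct_sl3 M \<circ> oct_flip) x = u1"
      using True \<open>al = 0\<close> by (simp add: x M oct_flip_def oct_sl3_def u1_def)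
    with oct_sl3_G2[OF M(1)] oct_flip_G2 show thesis
      by (intro that[of "oct_sl3 M \<circ> oct_flip"]) (auto intro: G2_comp)
  qed
qed

lemma G2_fixes_u1_maps_to_v2:
  assumes "(r2, r3) \<noteq> ((0::'a::field), 0)"
  obtains h where "h \<in> G2" "h u1 = u1" "h (Oct 0 (0, 0, 0) (0, r2, r3) 0) = v2"
proof -
  obtain M where M: "mdet M = 1" "mvmult M (1, 0, 0) = (1, 0, 0)"
    "mvmult (mcof M) (0, r2, r3) = (0, 1, 0)"
  proof (cases "r2 = 0")
    case False
    then show thesis
      by (intro that[of "((1, 0, 0), (0, r2, r3), (0, 0, 1/r2))"])
        (simp_all add: mdet_def mvmult_def mcof_def field_simps)
  next
    case True
    with assms have "r3 \<noteq> 0" by simp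
    with True show thesis
      by (intro that[of "((1, 0, 0), (0, 0, r3), (0, -1/r3, 0))"])
        (simp_all add: mdet_def mvmult_def mcof_def field_simps)
  qed
  show thesis
    by (rule that[OF oct_sl3_G2[OF M(1)]]) (simp_all add: M oct_sl3_def u1_def v2_def)
qed

section \<open>Traceless subalgebras\<close>

lemma v2_v3_span_element_if_isotropic:
  assumes B: "osubalgebra B" "B \<subseteq> O0" "u1 \<in> B"
    and z: "z \<in> B" "onorm z = 0" "\<forall>\<mu>. z \<noteq> osmult \<mu> (u1::'a::field oct)"
  obtains r2 r3 where "(r2, r3) \<noteq> (0, 0)" "Oct 0 (0, 0, 0) (0, r2, r3) 0 \<in> B"
proof -
  have "otr z = 0"
    using B(2) z(1) by (auto simp: O0_def)
  then obtain al p1 p2 p3 q1 q2 q3 where z_eq: "z = Oct al (p1, p2, p3) (q1, q2, q3) (-al)"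
    by (rule traceless_coordinates)
  have "omult u1 z \<in> B"
    using B z by (simp add: osubalgebra_omult)
  then have "otr (omult u1 z) = 0"
    using B(2) by (auto simp: O0_def)
  then have "q1 = 0"
    by (simp add: z_eq u1_def omult_def otr_def)
  show thesis
  proof (cases "(p3, p2) = (0, 0)")
    case False
    have "oadd (omult u1 z) (osmult al u1) = Oct 0 (0, 0, 0) (0, -p3, p2) 0"
      by (simp add: z_eq \<open>q1 = 0\<close> u1_def omult_def oadd_def osmult_def)
    moreover have "oadd (omult u1 z) (osmult al u1) \<in> B"
      using B z by (simp add: osubalgebra_oadd osubalgebra_osmult osubalgebra_omult)
    ultimately show thesis
      using False by (intro that[of "-p3" p2]) auto
  next
    case True
    with z(2) have "al = 0"
      by (simp add: z_eq \<open>q1 = 0\<close> onorm_def)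
    have "(q2, q3) \<noteq> (0, 0)"
    proof
      assume "(q2, q3) = (0, 0)"
      then have "z = osmult p1 u1"
        using True \<open>al = 0\<close> by (simp add: z_eq \<open>q1 = 0\<close> u1_def osmult_def)
      with z(3) show False by blast
    qed
    moreover have "oadd z (osmult (-p1) u1) = Oct 0 (0, 0, 0) (0, q2, q3) 0"
      using True \<open>al = 0\<close> by (simp add: z_eq \<open>q1 = 0\<close> u1_def oadd_def osmult_def)
    moreover have "oadd z (osmult (-p1) u1) \<in> B"
      using B z by (simp add: osubalgebra_oadd osubalgebra_osmult)
    ultimately show thesis
      by (intro that[of q2 q3]) auto
  qed
qed

lemma traceless_left_annihilator_u1:
  assumes "otr y = 0" "omult y u1 = (ozero::'a::field oct)"
  obtains a b c where "y = Oct 0 (a, 0, 0) (0, b, c) 0"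
proof -
  obtain al p1 p2 p3 q1 q2 q3 where y: "y = Oct al (p1, p2, p3) (q1, q2, q3) (-al)"
    using assms(1) by (rule traceless_coordinates)
  with assms(2) have "al = 0" "p2 = 0" "p3 = 0" "q1 = 0"
    by (simp_all add: u1_def omult_def ozero_def)
  with y show thesis
    by (intro that) simp
qed

lemma v2_v3_mem_if_product_u1:
  assumes "osubalgebra B" "u1 \<in> B" "y \<in> B" "z \<in> B"
    and y: "y = Oct 0 (a, 0, 0) (0, b, c) 0" and z: "z = Oct 0 (a', 0, 0) (0, b', c') 0"
    and "omult y z = (u1::'a::field oct)"
  shows "v2 \<in> B" "v3 \<in> B"
proof -
  have det: "c * b' - b * c' = 1"
    using assms(7) by (simp add: y z u1_def omult_def)
  have "oadd (osmult c z) (oadd (osmult (-c') y) (osmult (c'*a - c*a') u1)) = v2"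
    using det by (simp add: y z oadd_def osmult_def u1_def v2_def algebra_simps)
  moreover have "oadd (osmult c z) (oadd (osmult (-c') y) (osmult (c'*a - c*a') u1)) \<in> B"
    using assms(1-4) by (simp add: osubalgebra_oadd osubalgebra_osmult)
  ultimately show "v2 \<in> B" by simp
  have "oadd (osmult b' y) (oadd (osmult (-b) z) (osmult (b*a' - b'*a) u1)) = v3"
    using det by (simp add: y z oadd_def osmult_def u1_def v3_def algebra_simps)
  moreover have "oadd (osmult b' y) (oadd (osmult (-b) z) (osmult (b*a' - b'*a) u1)) \<in> B"
    using assms(1-4) by (simp add: osubalgebra_oadd osubalgebra_osmult)
  ultimately show "v3 \<in> B" by simp
qed

lemma not_oindep3_u1_if_product_zero:
  assumes y: "y = Oct 0 (a, 0, 0) (0, b, c) 0" and z: "z = Oct 0 (a', 0, 0) (0, b', c') 0"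
    and "omult y z = (ozero::'a::field oct)"
  shows "\<not> oindep3 u1 y z"
proof -
  have "b * c' = b' * c"
    using assms(3) by (simp add: y z omult_def ozero_def mult.commute)
  then obtain k2 k3 where k: "(k2, k3) \<noteq> (0, 0)" "k2 * b + k3 * b' = 0" "k2 * c + k3 * c' = 0"
    by (rule singular_2x2_kernel)
  have "oadd (osmult (- (k2 * a + k3 * a')) u1) (oadd (osmult k2 y) (osmult k3 z)) = ozero"
    using k by (simp add: y z u1_def oadd_def osmult_def ozero_def)
  with k(1) show ?thesis
    by (auto simp: oindep3_def)
qed

lemma traceless_subalgebra_commute:
  assumes "(2::'a::field) = 0" "osubalgebra A" "A \<subseteq> (O0 :: 'a oct set)" "a \<in> A" "b \<in> A"
  shows "omult a b = omult b a"
proof -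
  have "omult a b \<in> A"
    using assms(2,4,5) by (rule osubalgebra_omult)
  with assms show ?thesis
    by (intro omult_commute_char2) (auto simp: O0_def)
qed

lemma isotropic_if_oone_notin:
  assumes "osubalgebra A" "A \<subseteq> O0" "oone \<notin> A" "a \<in> A"
  shows "onorm a = 0"
proof (rule ccontr)
  assume "onorm a \<noteq> 0"
  moreover have "otr a = 0"
    using assms(2,4) by (auto simp: O0_def)
  ultimately have "osmult (- 1 / onorm a) (omult a a) = oone"
    by (simp add: omult_self_traceless)
  moreover have "osmult (- 1 / onorm a) (omult a a) \<in> A"
    using assms(1,4) by (simp add: osubalgebra_osmult osubalgebra_omult)
  ultimately show False
    using assms(3) by simp
qed

lemma isotropic_plus_scalar:
  fixes A :: "'a::alg_closed_field oct set"
  assumes A: "osubalgebra A" "A \<subseteq> O0" "oone \<in> A" and "w \<in> A"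
  obtains x l where "x \<in> A" "onorm x = 0" "w = oadd (osmult 1 x) (osmult l oone)"
proof -
  obtain l where l: "l * l = - onorm w"
    using nth_root_exists[of 2 "- onorm w"] by (auto simp: power2_eq_square)
  let ?x = "oadd w (osmult l oone)"
  have "otr w = 0"
    using A(2) assms(4) by (auto simp: O0_def)
  have "?x \<in> A"
    using A assms(4) by (simp add: osubalgebra_oadd osubalgebra_osmult)
  moreover from \<open>otr w = 0\<close> have "onorm ?x = 0"
    by (simp add: onorm_add_scalar l)
  moreover have "w = oadd (osmult 1 ?x) (osmult (-l) oone)"
    by (cases w rule: oct_coordinates) (simp add: oadd_def osmult_def oone_def)
  ultimately show thesis
    by (rule that)
qed

lemma exists_isotropic_pair:
  fixes A :: "'a::alg_closed_field oct set"
  assumes A: "osubalgebra A" "A \<subseteq> O0" "oone \<in> A"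
    and w: "w1 \<in> A" "w2 \<in> A" "w3 \<in> A" "oindep3 w1 w2 w3"
  obtains y z where "y \<in> A" "z \<in> A" "y \<noteq> ozero" "onorm y = 0" "onorm z = 0"
    "\<forall>\<mu>. z \<noteq> osmult \<mu> y"
proof -
  obtain x1 x2 x3 l1 l2 l3 where x: "x1 \<in> A" "x2 \<in> A" "x3 \<in> A"
      "onorm x1 = 0" "onorm x2 = 0" "onorm x3 = 0"
      "w1 = oadd (osmult 1 x1) (osmult l1 oone)" "w2 = oadd (osmult 1 x2) (osmult l2 oone)"
      "w3 = oadd (osmult 1 x3) (osmult l3 oone)"
    using isotropic_plus_scalar[OF A] w(1-3) by metis
  have "\<not> (\<exists>y. \<forall>x\<in>{x1, x2, x3}. \<exists>\<mu>. x = osmult \<mu> y)"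
  proof
    assume "\<exists>y. \<forall>x\<in>{x1, x2, x3}. \<exists>\<mu>. x = osmult \<mu> y"
    then obtain y m1 m2 m3 where "x1 = osmult m1 y" "x2 = osmult m2 y" "x3 = osmult m3 y"
      by auto
    with x(7-9) w(4) not_oindep3_span2 show False
      by (metis osmult_osmult)
  qed
  then obtain y z where "y \<in> {x1, x2, x3}" "z \<in> {x1, x2, x3}" "y \<noteq> ozero"
      "\<forall>\<mu>. z \<noteq> osmult \<mu> y"
    by (rule exists_noncollinear_pair)
  with x(1-6) show thesis
    by (intro that[of y z]) auto
qed

lemma G2_image_contains_oone_u1_v2:
  fixes A :: "'a::alg_closed_field oct set"
  assumes A: "osubalgebra A" "A \<subseteq> O0" "oone \<in> A"
    and w: "w1 \<in> A" "w2 \<in> A" "w3 \<in> A" "oindep3 w1 w2 w3"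
  obtains g where "g \<in> G2" "{oone, u1, v2} \<subseteq> g ` A"
proof -
  obtain y z where yz: "y \<in> A" "z \<in> A" "y \<noteq> ozero" "onorm y = 0" "onorm z = 0"
      "\<forall>\<mu>. z \<noteq> osmult \<mu> y"
    using exists_isotropic_pair[OF A w] by blast
  have "otr y = 0"
    using A(2) yz(1) by (auto simp: O0_def)
  then obtain g where g: "g \<in> G2" "g y = u1"
    using yz(3,4) by (elim G2_maps_isotropic_to_u1)
  have "\<forall>\<mu>. g z \<noteq> osmult \<mu> u1"
    using yz(6) g G2_inj[OF g(1)] by (metis G2_osmult injD)
  moreover have "u1 \<in> g ` A" "g z \<in> g ` A" "onorm (g z) = 0"
    using g yz by (auto simp: G2_onorm intro: rev_image_eqI)
  ultimately obtain r2 r3 where r: "(r2, r3) \<noteq> (0, 0)" "Oct 0 (0, 0, 0) (0, r2, r3) 0 \<in> g ` A"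
    using v2_v3_span_element_if_isotropic osubalgebra_image_G2[OF g(1) A(1)]
      O0_image_G2[OF g(1) A(2)] by metis
  obtain h where h: "h \<in> G2" "h u1 = u1" "h (Oct 0 (0, 0, 0) (0, r2, r3) 0) = v2"
    using G2_fixes_u1_maps_to_v2[OF r(1)] by blast
  have "oone \<in> h ` g ` A"
    using A(3) G2_oone[OF g(1)] G2_oone[OF h(1)] by (metis image_eqI)
  moreover have "u1 \<in> h ` g ` A" "v2 \<in> h ` g ` A"
    using \<open>u1 \<in> g ` A\<close> r(2) h(2,3) by (metis image_eqI)+
  ultimately show thesis
    using G2_comp[OF h(1) g(1)] by (intro that[of "h \<circ> g"]) (auto simp: image_comp)
qed

lemma G2_image_contains_u1_v2_v3_if_nonzero_product:
  assumes A: "osubalgebra A" "A \<subseteq> O0"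
    and isotropic: "\<forall>a\<in>A. onorm a = 0"
    and commute: "\<forall>a\<in>A. \<forall>b\<in>A. omult a b = omult b a"
    and yz: "y \<in> A" "z \<in> A" "omult y z \<noteq> (ozero::'a::field oct)"
  obtains g where "g \<in> G2" "{u1, v2, v3} \<subseteq> g ` A"
proof -
  have traceless: "otr a = 0" if "a \<in> A" for a
    using A(2) that by (auto simp: O0_def)
  have square_zero: "omult a a = ozero" if "a \<in> A" for a
    using that by (simp add: omult_self_traceless traceless isotropic)
  have x: "omult y z \<in> A"
    using A(1) yz by (simp add: osubalgebra_omult)
  then obtain g where g: "g \<in> G2" "g (omult y z) = u1"
    using yz(3) traceless isotropic by (metis G2_maps_isotropic_to_u1)
  (* y (yz) = (yy) z = 0 and z (yz) = z (zy) = (zz) y = 0 *)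
  have "omult (g y) u1 = ozero"
    using g yz omult_left_alternative[of y z] square_zero
    by (metis G2_omult G2_ozero omult_ozero_left)
  then obtain a b c where gy: "g y = Oct 0 (a, 0, 0) (0, b, c) 0"
    using traceless[OF yz(1)] G2_otr[OF g(1)] by (metis traceless_left_annihilator_u1)
  have "omult (g z) u1 = ozero"
    using g yz omult_left_alternative[of z y] square_zero commute
    by (metis G2_omult G2_ozero omult_ozero_left)
  then obtain a' b' c' where gz: "g z = Oct 0 (a', 0, 0) (0, b', c') 0"
    using traceless[OF yz(2)] G2_otr[OF g(1)] by (metis traceless_left_annihilator_u1)
  have "omult (g y) (g z) = u1"
    using g by (simp add: G2_omult)
  moreover have "u1 \<in> g ` A" "g y \<in> g ` A" "g z \<in> g ` A"
    using g x yz by (auto intro: rev_image_eqI)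
  ultimately have "v2 \<in> g ` A" "v3 \<in> g ` A"
    using v2_v3_mem_if_product_u1[OF osubalgebra_image_G2[OF g(1) A(1)] _ _ _ gy gz] by blast+
  with g \<open>u1 \<in> g ` A\<close> show thesis
    by (intro that[of g]) auto
qed

lemma null_subalgebra_not_oindep3:
  assumes A: "A \<subseteq> O0" "\<forall>a\<in>A. \<forall>b\<in>A. omult a b = (ozero::'a::field oct)"
    and w: "w1 \<in> A" "w2 \<in> A" "w3 \<in> A"
  shows "\<not> oindep3 w1 w2 w3"
proof
  assume indep: "oindep3 w1 w2 w3"
  have traceless: "otr a = 0" if "a \<in> A" for a
    using A(1) that by (auto simp: O0_def)
  have "onorm w1 = 0"
    using A(2) w(1) omult_self_traceless[OF traceless[OF w(1)]]
    by (metis osmult_oone_eq_ozero_iff neg_equal_0_iff_equal)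
  then obtain g where g: "g \<in> G2" "g w1 = u1"
    using oindep3_nonzero[OF indep] traceless[OF w(1)] by (metis G2_maps_isotropic_to_u1)
  have "omult (g w2) u1 = ozero" "omult (g w3) u1 = ozero"
    using A(2) w g by (metis G2_omult G2_ozero)+
  then obtain a2 b2 c2 a3 b3 c3 where
    "g w2 = Oct 0 (a2, 0, 0) (0, b2, c2) 0" "g w3 = Oct 0 (a3, 0, 0) (0, b3, c3) 0"
    using traceless w G2_otr[OF g(1)] by (metis traceless_left_annihilator_u1)
  moreover have "omult (g w2) (g w3) = ozero"
    using A(2) w g by (metis G2_omult G2_ozero)
  ultimately have "\<not> oindep3 u1 (g w2) (g w3)"
    by (rule not_oindep3_u1_if_product_zero)
  with oindep3_image_G2[OF g(1) indep] g(2) show False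
    by simp
qed

lemma G2_image_contains_u1_v2_v3:
  assumes "(2::'a::field) = 0"
    and A: "osubalgebra A" "A \<subseteq> (O0 :: 'a oct set)" "oone \<notin> A"
    and w: "w1 \<in> A" "w2 \<in> A" "w3 \<in> A" "oindep3 w1 w2 w3"
  obtains g where "g \<in> G2" "{u1, v2, v3} \<subseteq> g ` A"
proof -
  have "\<not> (\<forall>a\<in>A. \<forall>b\<in>A. omult a b = ozero)"
    using null_subalgebra_not_oindep3[OF A(2) _ w(1-3)] w(4) by blast
  then obtain y z where "y \<in> A" "z \<in> A" "omult y z \<noteq> ozero"
    by blast
  with that show thesis
    using G2_image_contains_u1_v2_v3_if_nonzero_product[OF A(1,2)] isotropic_if_oone_notin[OF A]
      traceless_subalgebra_commute[OF assms(1) A(1,2)] by blast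
qed

theorem lemma6p9:
  fixes A :: "'a::alg_closed_field oct set"
  assumes "CHAR('a) = 2"
    and "osubalgebra A"
    and "A \<subseteq> O0"
    and "odim_ge A 3"
  shows "\<exists>g\<in>G2. {oone, u1, v2} \<subseteq> g ` A
            \<or> ({u1, v2, v3} \<subseteq> g ` A \<and> oone \<notin> g ` A)"
proof -
  obtain w1 w2 w3 where w: "w1 \<in> A" "w2 \<in> A" "w3 \<in> A" "oindep3 w1 w2 w3"
    using assms(4) by (rule odim_ge_3_oindep3)
  show ?thesis
  proof (cases "oone \<in> A")
    case True
    then show ?thesis
      using G2_image_contains_oone_u1_v2[OF assms(2,3) True w] by blast
  next
    case False
    have "(2::'a) = 0"
      using of_nat_CHAR[where 'a = 'a] assms(1) by simp
    then obtain g where g: "g \<in> G2" "{u1, v2, v3} \<subseteq> g ` A"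
      using G2_image_contains_u1_v2_v3[OF _ assms(2,3) False w] by blast
    have "oone \<notin> g ` A"
      using False G2_inj[OF g(1)] G2_oone[OF g(1)] by (metis image_iff injD)
    with g show ?thesis
      by blast
  qed
qed

end
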